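(* Let $p$ be an odd prime, let $d>1$ be an integer, and let $q$ be an even power of $p$ with $q \equiv 1 \pmod{2d}$. Let $\chi$ be a multiplicative character of $\mathbb{F}_q$ of order $d$. Let $A \subseteq \mathbb{F}_q$ with $|A|=\sqrt{q}$, and for $c \in \mathbb{F}_q^*$ let $S(c)=\sum_{a \in A} e_p\big(\operatorname{Tr}(ac)\big)$. Then $A$ is a maximum clique in $GP(q,d)$ if and only if for every $c \in \mathbb{F}_q^*$ the complex numbers $\chi(c)|S(c)|^2$ and $G(\chi)$ share the same argument. In particular, if $\omega\big(GP(q,d)\big)=\sqrt{q}$, then $\epsilon(\chi)$ is a $d$-th root of unity, the Gauss sum $G(\chi)=\epsilon(\chi)\sqrt{q}$ is pure, and $S(c)=0$ for every $c \in \mathbb{F}_q^*$ with $\chi(c) \neq \epsilon(\chi)$.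
   Context: $GP(q,d)$ is the graph on $\mathbb{F}_q$ in which distinct $x,y$ are adjacent iff $x-y$ is a $d$-th power in $\mathbb{F}_q^*$; $\omega$ denotes clique number. $\operatorname{Tr}$ is the absolute trace $\mathbb{F}_q \to \mathbb{F}_p$, $\operatorname{Tr}(\alpha)=\alpha+\alpha^p+\dots+\alpha^{q/p}$, and $e_p(x)=e^{2\pi i x/p}$ for $x\in\mathbb{F}_p$ (identified with $\{0,\dots,p-1\}$). Multiplicative characters are extended by $\chi(0)=0$. The Gauss sum is $G(\chi)=\sum_{c \in \mathbb{F}_q}\chi(c)e_p(\operatorname{Tr}(c))$, and for nontrivial $\chi$ the normalized Gauss sum is $\epsilon(\chi)=q^{-1/2}G(\chi)$. A Gauss sum is pure if some nonzero integral power of it is a real number. The number $0$ is regarded as sharing the argument of any complex number. *)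

theory Defs
  imports "HOL-Analysis.Analysis" "HOL-Computational_Algebra.Primes"
begin

definition ff_degree :: "'a::{finite,field} itself \<Rightarrow> nat" where
  "ff_degree _ = (THE n. CARD('a) = CHAR('a) ^ n)"

definition abs_trace :: "'a::{finite,field} \<Rightarrow> 'a" where
  "abs_trace x = (\<Sum>i < ff_degree TYPE('a). x ^ (CHAR('a) ^ i))"

definition prime_field_rep :: "'a::{finite,field} \<Rightarrow> nat" where
  "prime_field_rep t = (THE k. k < CHAR('a) \<and> of_nat k = t)"

definition e_p :: "'a::{finite,field} \<Rightarrow> complex" where
  "e_p t = cis (2 * pi * real (prime_field_rep t) / real CHAR('a))"

definition mult_char :: "('a::{finite,field} \<Rightarrow> complex) \<Rightarrow> bool" where
  "mult_char chi \<longleftrightarrow> chi 0 = 0 \<and> chi 1 = 1 \<and>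
     (\<forall>x y. x \<noteq> 0 \<longrightarrow> y \<noteq> 0 \<longrightarrow> chi (x * y) = chi x * chi y)"

definition char_order :: "('a::{finite,field} \<Rightarrow> complex) \<Rightarrow> nat \<Rightarrow> bool" where
  "char_order chi d \<longleftrightarrow> d > 0 \<and> (\<forall>x. x \<noteq> 0 \<longrightarrow> chi x ^ d = 1) \<and>
     (\<forall>k. 0 < k \<and> k < d \<longrightarrow> (\<exists>x. x \<noteq> 0 \<and> chi x ^ k \<noteq> 1))"

definition gauss_sum :: "('a::{finite,field} \<Rightarrow> complex) \<Rightarrow> complex" where
  "gauss_sum chi = (\<Sum>c\<in>UNIV. chi c * e_p (abs_trace c))"

definition norm_gauss_sum :: "('a::{finite,field} \<Rightarrow> complex) \<Rightarrow> complex" where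
  "norm_gauss_sum chi = gauss_sum chi / complex_of_real (sqrt (real CARD('a)))"

definition pure :: "complex \<Rightarrow> bool" where
  "pure z \<longleftrightarrow> (\<exists>n::int. n \<noteq> 0 \<and> z powi n \<in> \<real>)"

text \<open>Same argument; 0 shares the argument of every complex number.\<close>
definition same_arg :: "complex \<Rightarrow> complex \<Rightarrow> bool" where
  "same_arg z w \<longleftrightarrow> z = 0 \<or> w = 0 \<or> (\<exists>r::real. r > 0 \<and> z = of_real r * w)"

definition gp_adj :: "nat \<Rightarrow> 'a::{finite,field} \<Rightarrow> 'a \<Rightarrow> bool" where
  "gp_adj d x y \<longleftrightarrow> x \<noteq> y \<and> (\<exists>z. z \<noteq> 0 \<and> x - y = z ^ d)"

definition gp_clique :: "nat \<Rightarrow> 'a::{finite,field} set \<Rightarrow> bool" where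
  "gp_clique d A \<longleftrightarrow> (\<forall>x\<in>A. \<forall>y\<in>A. x \<noteq> y \<longrightarrow> gp_adj d x y)"

definition gp_clique_number :: "'a::{finite,field} itself \<Rightarrow> nat \<Rightarrow> nat" where
  "gp_clique_number _ d = Max {card (A :: 'a set) | A. gp_clique d A}"

definition gp_max_clique :: "nat \<Rightarrow> 'a::{finite,field} set \<Rightarrow> bool" where
  "gp_max_clique d A \<longleftrightarrow> gp_clique d A \<and> card A = gp_clique_number TYPE('a) d"

end

theory Submission
  imports Defs "HOL-Computational_Algebra.Polynomial"
begin

text \<open>
  Let \<open>n = |A| = \<surd>q\<close>, let \<open>S\<close> be the exponential sum of \<open>A\<close> and \<open>G = G(\<chi>)\<close>.
  Orthogonality of the additive characters gives \<open>\<Sum>\<^sub>c\<^sub>\<noteq>\<^sub>0 |S(c)|\<^sup>2 = n\<^sup>2(n - 1)\<close> and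
  \<open>\<Sum>\<^sub>c \<chi>(c)|S(c)|\<^sup>2 = G \<Sum>\<^sub>a\<^sub>,\<^sub>b\<^sub>\<in>\<^sub>A conj \<chi>(a - b)\<close>, while \<open>|G| = n\<close>.
  So all the numbers \<open>\<chi>(c)|S(c)|\<^sup>2\<close> point in the direction of \<open>G\<close> exactly when the triangle
  inequality for their sum is an equality, i.e. when \<open>Re \<Sum>\<^sub>a\<^sub>\<noteq>\<^sub>b \<chi>(a - b) = n(n - 1)\<close>, i.e. when
  \<open>\<chi>(a - b) = 1\<close> for all distinct \<open>a, b \<in> A\<close>. The kernel of \<open>\<chi>\<close> consists of the nonzero
  \<open>d\<close>-th powers, so this says that \<open>A\<close> is a clique; and no clique has more than \<open>\<surd>q\<close>
  elements, because \<open>(a, b) \<mapsto> a + g b\<close> is injective on it for any non-\<open>d\<close>-th power \<open>g\<close>.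
  If a clique of size \<open>\<surd>q\<close> exists, Parseval provides a \<open>c \<noteq> 0\<close> with \<open>S(c) \<noteq> 0\<close>, and the
  equality of arguments forces \<open>G = \<chi>(c)\<surd>q\<close>; the remaining claims follow from this.
\<close>

section \<open>Finite fields\<close>

lemma of_nat_eq_iff_mod_CHAR:
  "(of_nat m :: 'a::ring_1) = of_nat n \<longleftrightarrow> m mod CHAR('a) = n mod CHAR('a)"
proof -
  have "(of_nat m :: 'a) = of_nat n \<longleftrightarrow> (of_int (int m - int n) :: 'a) = 0"
    by simp
  also have "\<dots> \<longleftrightarrow> int CHAR('a) dvd int m - int n"
    by (rule of_int_eq_0_iff_char_dvd)
  also have "\<dots> \<longleftrightarrow> int m mod int CHAR('a) = int n mod int CHAR('a)"
    by (rule mod_eq_dvd_iff[symmetric])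
  finally show ?thesis
    by (simp flip: zmod_int)
qed

lemma prime_CHAR_finite_field: "prime CHAR('a::{finite,field})"
  by (intro prime_CHAR_semidom finite_imp_CHAR_pos) simp

lemma finite_field_card_ge_2: "CARD('a::{finite,field}) \<ge> 2"
proof -
  have "card {0, 1::'a} \<le> CARD('a)"
    by (rule card_mono) auto
  then show ?thesis
    by simp
qed

lemma finite_field_power_card_minus_1:
  assumes "(x::'a::{finite,field}) \<noteq> 0"
  shows "x ^ (CARD('a) - 1) = 1"
proof -
  let ?U = "UNIV - {0::'a}"
  have "x ^ card ?U * \<Prod>?U = (\<Prod>y\<in>?U. x * y)"
    by (simp add: prod.distrib)
  also have "\<dots> = \<Prod>?U"
    by (rule prod.reindex_bij_witness[of _ "\<lambda>y. y / x" "\<lambda>y. x * y"]) (use assms in auto)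
  finally have "x ^ card ?U = 1"
    by simp
  then show ?thesis
    by (simp add: card_Diff_singleton)
qed

lemma finite_field_power_card: "(x::'a::{finite,field}) ^ CARD('a) = x"
proof (cases "x = 0")
  case False
  have "CARD('a) = Suc (CARD('a) - 1)"
    using finite_UNIV_card_ge_0[where 'a='a] by simp
  then show ?thesis
    by (metis False finite_field_power_card_minus_1 mult.right_neutral power_Suc)
qed simp

lemma
  fixes Q :: "'a::idom poly"
  assumes "degree Q < n"
  shows finite_roots_power_eq_poly: "finite {z. z ^ n = poly Q z}"
    and card_roots_power_eq_poly_le: "card {z. z ^ n = poly Q z} \<le> n"
proof -
  define P where "P = monom 1 n - Q"
  have "coeff P n = 1"
    using assms by (simp add: P_def coeff_eq_0)
  then have "P \<noteq> 0"
    by auto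
  have "degree P \<le> n"
    unfolding P_def using assms by (intro degree_diff_le) (simp_all add: degree_monom_le)
  moreover have roots: "{z. z ^ n = poly Q z} = {z. poly P z = 0}"
    by (simp add: P_def poly_monom)
  ultimately show "card {z. z ^ n = poly Q z} \<le> n"
    using card_poly_roots_bound[OF \<open>P \<noteq> 0\<close>] by simp
  show "finite {z. z ^ n = poly Q z}"
    unfolding roots using poly_roots_finite[OF \<open>P \<noteq> 0\<close>] .
qed

lemma of_nat_power_CHAR:
  assumes "prime CHAR('a)"
  shows "(of_nat n :: 'a::comm_semiring_1) ^ CHAR('a) = of_nat n"
  by (induction n) (simp_all add: freshmans_dream[OF assms] prime_gt_0_nat[OF assms] power_0_left)

lemma power_CHAR_fixed_imp_of_nat:
  assumes "CHAR('a) > 0" and "(t::'a::idom) ^ CHAR('a) = t"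
  shows "\<exists>j<CHAR('a). t = of_nat j"
proof -
  let ?p = "CHAR('a)"
  let ?R = "{z::'a. z ^ ?p = poly [:0, 1:] z}"
  have p: "prime ?p"
    using assms(1) by (rule prime_CHAR_semidom)
  then have deg: "degree [:0, 1::'a:] < ?p"
    using prime_gt_1_nat by auto
  have "inj_on (of_nat :: nat \<Rightarrow> 'a) {..<?p}"
    by (auto simp: inj_on_def of_nat_eq_iff_mod_CHAR)
  then have "card ((of_nat :: nat \<Rightarrow> 'a) ` {..<?p}) = ?p"
    by (simp add: card_image)
  moreover have "(of_nat :: nat \<Rightarrow> 'a) ` {..<?p} \<subseteq> ?R"
    using of_nat_power_CHAR[OF p] by auto
  ultimately have "(of_nat :: nat \<Rightarrow> 'a) ` {..<?p} = ?R"
    using card_roots_power_eq_poly_le[OF deg] finite_roots_power_eq_poly[OF deg]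
    by (intro card_seteq) auto
  then show ?thesis
    using assms(2) by auto
qed

lemma prime_field_rep_of_nat:
  "prime_field_rep (of_nat n :: 'a::{finite,field}) = n mod CHAR('a)"
  unfolding prime_field_rep_def
  by (rule the_equality) (auto simp: of_nat_eq_iff_mod_CHAR finite_imp_CHAR_pos)

section \<open>The trace and the canonical additive character\<close>

text \<open>\<^const>\<open>ff_degree\<close> is a definite description: the hypothesis \<open>CARD('a) = CHAR('a) ^ k\<close>
  carried by the following lemmas is what makes \<^const>\<open>abs_trace\<close> the trace of \<open>\<bbbF>\<^sub>q\<close> over \<open>\<bbbF>\<^sub>p\<close>.\<close>

lemma ff_degree_eq:
  assumes "CARD('a::{finite,field}) = CHAR('a) ^ k"
  shows "ff_degree TYPE('a) = k"
  unfolding ff_degree_def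
proof (rule the_equality)
  fix n assume "CARD('a) = CHAR('a) ^ n"
  with assms show "n = k"
    using prime_gt_1_nat[OF prime_CHAR_finite_field[where 'a='a]] by (simp add: power_inject_exp)
qed (fact assms)

lemma abs_trace_add: "abs_trace (x + y :: 'a::{finite,field}) = abs_trace x + abs_trace y"
  unfolding abs_trace_def
  by (simp add: freshmans_dream' prime_CHAR_finite_field sum.distrib)

lemma abs_trace_power_CHAR:
  assumes "CARD('a::{finite,field}) = CHAR('a) ^ k"
  shows "abs_trace (x::'a) ^ CHAR('a) = abs_trace x"
proof -
  let ?p = "CHAR('a)"
  have "abs_trace x ^ ?p = (\<Sum>i<k. (x ^ (?p ^ i)) ^ ?p)"
    unfolding abs_trace_def ff_degree_eq[OF assms]
    by (rule freshmans_dream_sum) (simp_all add: prime_CHAR_finite_field)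
  also have "\<dots> = (\<Sum>i<k. x ^ (?p ^ Suc i))"
    by (simp add: power_mult[symmetric] mult.commute)
  also have "\<dots> = (\<Sum>i<Suc k. x ^ (?p ^ i)) - x"
    by (subst sum.lessThan_Suc_shift) simp
  also have "\<dots> = (\<Sum>i<k. x ^ (?p ^ i))"
    using finite_field_power_card[of x] assms by simp
  finally show ?thesis
    unfolding abs_trace_def ff_degree_eq[OF assms] .
qed

lemma abs_trace_in_prime_field:
  assumes "CARD('a::{finite,field}) = CHAR('a) ^ k"
  shows "\<exists>j<CHAR('a). abs_trace (x::'a) = of_nat j"
  by (rule power_CHAR_fixed_imp_of_nat[OF finite_imp_CHAR_pos abs_trace_power_CHAR[OF assms]]) simp

text \<open>The trace is a polynomial of degree \<open>q/p\<close>, so it cannot vanish on all \<open>q\<close> elements.\<close>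
lemma abs_trace_not_zero:
  assumes "CARD('a::{finite,field}) = CHAR('a) ^ k"
  shows "\<exists>x::'a. abs_trace x \<noteq> 0"
proof (rule ccontr)
  assume zero: "\<nexists>x::'a. abs_trace x \<noteq> 0"
  let ?p = "CHAR('a)"
  have p: "?p > 1"
    using prime_CHAR_finite_field prime_gt_1_nat by blast
  have "k > 0"
    using assms finite_field_card_ge_2[where 'a='a] by (cases k) auto
  define T :: "'a poly" where "T = (\<Sum>i<k. monom 1 (?p ^ i))"
  have "coeff T 1 = (\<Sum>i<k. if i = 0 then 1 else 0)"
    unfolding T_def coeff_sum coeff_monom using p by (intro sum.cong) auto
  also have "\<dots> = 1"
    using \<open>k > 0\<close> by simp
  finally have "T \<noteq> 0"
    by auto
  have "degree T \<le> ?p ^ (k - 1)"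
    unfolding T_def
  proof (rule degree_sum_le)
    fix i assume "i \<in> {..<k}"
    then have "?p ^ i \<le> ?p ^ (k - 1)"
      using p by (intro power_increasing) auto
    then show "degree (monom (1::'a) (?p ^ i)) \<le> ?p ^ (k - 1)"
      using degree_monom_le order_trans by blast
  qed simp
  moreover have "{x. poly T x = 0} = UNIV"
    using zero by (auto simp: T_def abs_trace_def ff_degree_eq[OF assms] poly_sum poly_monom)
  ultimately have "CARD('a) \<le> ?p ^ (k - 1)"
    using card_poly_roots_bound[OF \<open>T \<noteq> 0\<close>] by simp
  moreover have "?p ^ (k - 1) < ?p ^ k"
    using p \<open>k > 0\<close> by (intro power_strict_increasing) auto
  ultimately show False
    using assms by simp
qed

lemma e_p_of_nat: "e_p (of_nat n :: 'a::{finite,field}) = cis (2 * pi * n / CHAR('a))"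
proof -
  let ?p = "CHAR('a)"
  have "real n = real (n mod ?p) + real ?p * real (n div ?p)"
    by (metis mod_mult_div_eq of_nat_add of_nat_mult add.commute)
  then have "2 * pi * n / ?p = 2 * pi * real (n mod ?p) / ?p + 2 * pi * real (n div ?p)"
    by (simp add: field_simps finite_imp_CHAR_pos)
  then show ?thesis
    by (simp add: e_p_def prime_field_rep_of_nat flip: cis_mult)
qed

lemma e_p_of_nat_eq_1_iff: "e_p (of_nat n :: 'a::{finite,field}) = 1 \<longleftrightarrow> (of_nat n :: 'a) = 0"
  using complex_root_unity_eq_1[of "CHAR('a)" n] finite_imp_CHAR_pos[where 'a='a]
  by (simp add: e_p_of_nat cis_conv_exp of_nat_eq_0_iff_char_dvd mult_ac)

definition add_char :: "'a::{finite,field} \<Rightarrow> complex" where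
  "add_char x = e_p (abs_trace x)"

lemma norm_add_char [simp]: "norm (add_char x) = 1"
  by (simp add: add_char_def e_p_def)

lemma add_char_add:
  assumes "CARD('a::{finite,field}) = CHAR('a) ^ k"
  shows "add_char (x + y :: 'a) = add_char x * add_char y"
proof -
  obtain i j where "abs_trace x = of_nat i" "abs_trace y = of_nat j"
    using abs_trace_in_prime_field[OF assms] by metis
  then have "add_char (x + y) = e_p (of_nat (i + j) :: 'a)"
    by (simp only: add_char_def abs_trace_add of_nat_add)
  also have "\<dots> = e_p (of_nat i :: 'a) * e_p (of_nat j :: 'a)"
    unfolding e_p_of_nat by (simp add: cis_mult add_divide_distrib distrib_left)
  finally show ?thesis
    by (simp add: add_char_def \<open>abs_trace x = _\<close> \<open>abs_trace y = _\<close>)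
qed

lemma add_char_0: "add_char (0::'a::{finite,field}) = 1"
proof -
  have "abs_trace (0::'a) = of_nat 0"
    using prime_gt_0_nat[OF prime_CHAR_finite_field[where 'a='a]]
    by (simp add: abs_trace_def power_0_left)
  then show ?thesis
    by (simp only: add_char_def e_p_of_nat) simp
qed

lemma cnj_add_char:
  assumes "CARD('a::{finite,field}) = CHAR('a) ^ k"
  shows "cnj (add_char x) = add_char (- x :: 'a)"
proof -
  have "add_char x * add_char (- x) = 1"
    using add_char_add[OF assms, of x "- x"] add_char_0[where 'a='a] by simp
  moreover have "add_char x * cnj (add_char x) = 1"
    using complex_norm_square[of "add_char x"] by simp
  ultimately show ?thesis
    by (metis mult.left_commute mult.right_neutral)
qed

lemma add_char_nontrivial:
  assumes "CARD('a::{finite,field}) = CHAR('a) ^ k"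
  shows "\<exists>x::'a. add_char x \<noteq> 1"
proof -
  obtain x :: 'a where "abs_trace x \<noteq> 0"
    using abs_trace_not_zero[OF assms] by blast
  moreover obtain j where "abs_trace x = of_nat j"
    using abs_trace_in_prime_field[OF assms] by blast
  ultimately have "add_char x \<noteq> 1"
    by (simp add: add_char_def e_p_of_nat_eq_1_iff)
  then show ?thesis ..
qed

lemma sum_add_char:
  assumes "CARD('a::{finite,field}) = CHAR('a) ^ k"
  shows "(\<Sum>x\<in>UNIV. add_char (t * x :: 'a)) = (if t = 0 then of_nat CARD('a) else 0)"
proof (cases "t = 0")
  case False
  obtain x0 :: 'a where x0: "add_char x0 \<noteq> 1"
    using add_char_nontrivial[OF assms] by blast
  have "(\<Sum>y\<in>UNIV. add_char (y :: 'a)) = (\<Sum>y\<in>UNIV. add_char (x0 + y))"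
    by (rule sum.reindex_bij_witness[of _ "\<lambda>y. x0 + y" "\<lambda>y. y - x0"]) auto
  also have "\<dots> = add_char x0 * (\<Sum>y\<in>UNIV. add_char (y :: 'a))"
    by (simp add: add_char_add[OF assms] sum_distrib_left)
  finally have "(1 - add_char x0) * (\<Sum>y\<in>UNIV. add_char (y :: 'a)) = 0"
    by (simp add: algebra_simps)
  with x0 have "(\<Sum>y\<in>UNIV. add_char (y :: 'a)) = 0"
    by simp
  moreover have "(\<Sum>x\<in>UNIV. add_char (t * x)) = (\<Sum>y\<in>UNIV. add_char (y :: 'a))"
    by (rule sum.reindex_bij_witness[of _ "\<lambda>y. y / t" "\<lambda>x. t * x"]) (use False in auto)
  ultimately show ?thesis
    using False by simp
qed (simp add: add_char_0)

section \<open>Multiplicative characters\<close>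

lemma mult_char_mult:
  assumes "mult_char chi"
  shows "chi (x * y) = chi x * chi y"
  using assms unfolding mult_char_def by (cases "x = 0 \<or> y = 0") auto

lemma mult_char_power:
  assumes "mult_char chi"
  shows "chi (x ^ n) = chi x ^ n"
proof (induction n)
  case 0
  then show ?case
    using assms by (simp add: mult_char_def)
next
  case (Suc n)
  then show ?case
    by (simp add: mult_char_mult[OF assms])
qed

lemma char_order_power_eq_1:
  assumes "char_order chi d" "x \<noteq> 0"
  shows "chi x ^ d = 1"
  using assms unfolding char_order_def by simp

lemma norm_char:
  assumes "char_order chi d" "x \<noteq> 0"
  shows "norm (chi x) = 1"
  using power_eq_1_iff[OF char_order_power_eq_1[OF assms]] assms(1) by (auto simp: char_order_def)

lemma char_nontrivial:
  assumes "char_order chi d" "d > 1"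
  shows "\<exists>x. x \<noteq> 0 \<and> chi x \<noteq> 1"
  using assms unfolding char_order_def by (metis power_one_right zero_less_one)

lemma char_inverse:
  fixes chi :: "'a::{finite,field} \<Rightarrow> complex"
  assumes "mult_char chi" "char_order chi d"
  shows "chi (inverse x) = cnj (chi x)"
proof (cases "x = 0")
  case False
  have "chi (inverse x) * chi x = 1"
    using mult_char_mult[OF assms(1), of "inverse x" x] assms(1) False
    by (simp add: mult_char_def)
  have "chi x * cnj (chi x) = 1"
    using complex_norm_square[of "chi x"] norm_char[OF assms(2) False] by simp
  have "chi (inverse x) = chi (inverse x) * (chi x * cnj (chi x))"
    using \<open>chi x * cnj (chi x) = 1\<close> by simp
  also have "\<dots> = cnj (chi x)"
    using \<open>chi (inverse x) * chi x = 1\<close> by (simp add: mult.assoc[symmetric])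
  finally show ?thesis .
qed (use assms(1) in \<open>simp add: mult_char_def\<close>)

lemma sum_nonzero_multiplicative_eq_0:
  fixes f :: "'a::{finite,field} \<Rightarrow> 'b::idom"
  assumes mult: "\<And>x y. x \<noteq> 0 \<Longrightarrow> y \<noteq> 0 \<Longrightarrow> f (x * y) = f x * f y"
    and "x0 \<noteq> 0" "f x0 \<noteq> 1"
  shows "(\<Sum>x\<in>UNIV - {0}. f x) = 0"
proof -
  have "(\<Sum>x\<in>UNIV - {0}. f x) = (\<Sum>x\<in>UNIV - {0}. f (x0 * x))"
    by (rule sum.reindex_bij_witness[of _ "\<lambda>y. x0 * y" "\<lambda>y. y / x0"]) (use \<open>x0 \<noteq> 0\<close> in auto)
  also have "\<dots> = f x0 * (\<Sum>x\<in>UNIV - {0}. f x)"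
    unfolding sum_distrib_left using \<open>x0 \<noteq> 0\<close> by (intro sum.cong) (auto simp: mult)
  finally have "(1 - f x0) * (\<Sum>x\<in>UNIV - {0}. f x) = 0"
    by (simp add: algebra_simps)
  with \<open>f x0 \<noteq> 1\<close> show ?thesis
    by simp
qed

lemma sum_char_eq_0:
  fixes chi :: "'a::{finite,field} \<Rightarrow> complex"
  assumes "mult_char chi" "char_order chi d" "d > 1"
  shows "(\<Sum>x\<in>UNIV. chi x) = 0"
proof -
  obtain x0 :: 'a where "x0 \<noteq> 0" "chi x0 \<noteq> 1"
    using char_nontrivial[OF assms(2,3)] by blast
  then have "(\<Sum>x\<in>UNIV - {0}. chi x) = 0"
    by (intro sum_nonzero_multiplicative_eq_0) (simp_all add: mult_char_mult[OF assms(1)])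
  then show ?thesis
    using sum.remove[of UNIV 0 chi] assms(1) by (simp add: mult_char_def)
qed

text \<open>On nonzero elements the indicator of \<open>ker \<chi>\<close> is \<open>(\<chi>\<^sup>0 + \<dots> + \<chi>\<^sup>d\<^sup>-\<^sup>1) / d\<close>, and
  \<open>\<Sum>\<^sub>x\<^sub>\<noteq>\<^sub>0 \<chi>(x)\<^sup>k = 0\<close> for \<open>0 < k < d\<close>.\<close>
lemma card_char_kernel:
  fixes chi :: "'a::{finite,field} \<Rightarrow> complex"
  assumes "mult_char chi" "char_order chi d"
  shows "d * card {x. x \<noteq> 0 \<and> chi x = 1} = CARD('a) - 1"
proof -
  let ?U = "UNIV - {0::'a}"
  have geometric: "(\<Sum>k<d. chi x ^ k) = (if chi x = 1 then of_nat d else 0)" if "x \<in> ?U" for x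
    using char_order_power_eq_1[OF assms(2)] that by (simp add: sum_gp_strict)
  have orthogonal: "(\<Sum>x\<in>?U. chi x ^ k) = (if k = 0 then of_nat (CARD('a) - 1) else 0)"
    if k: "k < d" for k
  proof (cases "k = 0")
    case False
    then obtain x0 where "x0 \<noteq> 0" "chi x0 ^ k \<noteq> 1"
      using assms(2) k unfolding char_order_def by (meson neq0_conv)
    then show ?thesis
      using False
      by (intro trans[OF sum_nonzero_multiplicative_eq_0[of "\<lambda>x. chi x ^ k" x0]])
         (simp_all add: mult_char_mult[OF assms(1)] power_mult_distrib)
  qed (simp add: card_Diff_singleton)
  have "{x \<in> ?U. chi x = 1} = {x. x \<noteq> 0 \<and> chi x = 1}"
    by auto
  then have "(of_nat (d * card {x. x \<noteq> 0 \<and> chi x = 1}) :: complex)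
      = (\<Sum>x\<in>{x \<in> ?U. chi x = 1}. of_nat d)"
    by simp
  also have "\<dots> = (\<Sum>x\<in>?U. if chi x = 1 then of_nat d else 0)"
    by (rule sum.inter_filter) simp
  also have "\<dots> = (\<Sum>x\<in>?U. \<Sum>k<d. chi x ^ k)"
    by (simp add: geometric)
  also have "\<dots> = (\<Sum>k<d. \<Sum>x\<in>?U. chi x ^ k)"
    by (rule sum.swap)
  also have "\<dots> = (\<Sum>k<d. if k = 0 then of_nat (CARD('a) - 1) else 0)"
    by (simp add: orthogonal)
  also have "\<dots> = of_nat (CARD('a) - 1)"
    using assms(2) by (simp add: char_order_def)
  finally show ?thesis
    by (simp only: of_nat_eq_iff)
qed

lemma card_nonzero_le_card_powers:
  assumes "d > 0"
  shows "CARD('a::{finite,field}) - 1 \<le> d * card ((\<lambda>z. z ^ d) ` (UNIV - {0::'a}))"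
proof -
  let ?P = "(\<lambda>z. z ^ d) ` (UNIV - {0::'a})"
  have "card (UNIV - {0::'a}) \<le> card (\<Union>w\<in>?P. {z::'a. z ^ d = w})"
    by (intro card_mono) auto
  also have "\<dots> \<le> (\<Sum>w\<in>?P. card {z::'a. z ^ d = w})"
    by (rule card_UN_le) simp
  also have "\<dots> \<le> (\<Sum>w\<in>?P. d)"
    using card_roots_power_eq_poly_le[of "[:w:]" d for w :: 'a] assms by (intro sum_mono) simp
  finally show ?thesis
    by (simp add: card_Diff_singleton mult.commute)
qed

lemma char_eq_1_iff_power:
  fixes chi :: "'a::{finite,field} \<Rightarrow> complex"
  assumes "mult_char chi" "char_order chi d" "x \<noteq> 0"
  shows "chi x = 1 \<longleftrightarrow> (\<exists>z. z \<noteq> 0 \<and> x = z ^ d)"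
proof -
  let ?P = "(\<lambda>z. z ^ d) ` (UNIV - {0::'a})" and ?K = "{x. x \<noteq> 0 \<and> chi x = 1}"
  have "d > 0"
    using assms(2) by (simp add: char_order_def)
  have "d * card ?K \<le> d * card ?P"
    using card_char_kernel[OF assms(1,2)] card_nonzero_le_card_powers[OF \<open>d > 0\<close>, where 'a='a]
    by simp
  then have "card ?K \<le> card ?P"
    using \<open>d > 0\<close> by simp
  moreover have "?P \<subseteq> ?K"
    by (auto simp: mult_char_power[OF assms(1)] char_order_power_eq_1[OF assms(2)])
  ultimately have "?P = ?K"
    by (intro card_seteq) auto
  then show ?thesis
    using assms(3) by blast
qed

section \<open>Complex numbers with the same argument\<close>

lemma same_arg_iff_nonneg_Reals:
  assumes "w \<noteq> 0"
  shows "same_arg z w \<longleftrightarrow> cnj w * z \<in> \<real>\<^sub>\<ge>\<^sub>0"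
proof
  assume "same_arg z w"
  then consider "z = 0" | r where "r > 0" "z = of_real r * w"
    using assms unfolding same_arg_def by blast
  then show "cnj w * z \<in> \<real>\<^sub>\<ge>\<^sub>0"
  proof cases
    case 2
    then have "cnj w * z = of_real (r * (norm w)\<^sup>2)"
      unfolding of_real_mult complex_norm_square by (simp add: mult_ac)
    with \<open>r > 0\<close> show ?thesis
      by simp
  qed simp
next
  assume "cnj w * z \<in> \<real>\<^sub>\<ge>\<^sub>0"
  then obtain m where m: "cnj w * z = of_real m" "m \<ge> 0"
    by (auto elim: nonneg_Reals_cases)
  have "of_real ((norm w)\<^sup>2) * z = of_real m * w"
    unfolding complex_norm_square by (metis m(1) mult.assoc mult.commute)
  then have "z = of_real (m / (norm w)\<^sup>2) * w"
    using assms by (simp add: field_simps)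
  then show "same_arg z w"
    using assms m(2) unfolding same_arg_def
    by (cases "m = 0") (auto intro!: exI[of _ "m / (norm w)\<^sup>2"])
qed

text \<open>The equality case of the triangle inequality, measured in the direction of \<open>w\<close>.\<close>
lemma sum_same_arg_iff:
  assumes "finite I" "w \<noteq> 0"
  shows "(\<forall>i\<in>I. same_arg (z i) w) \<longleftrightarrow> Re (cnj w * sum z I) = norm w * (\<Sum>i\<in>I. norm (z i))"
proof -
  let ?u = "\<lambda>i. cnj w * z i"
  have "(\<forall>i\<in>I. same_arg (z i) w) \<longleftrightarrow> (\<forall>i\<in>I. norm (?u i) - Re (?u i) = 0)"
    by (simp add: same_arg_iff_nonneg_Reals[OF assms(2)] flip: norm_eq_Re_iff)
  also have "\<dots> \<longleftrightarrow> (\<Sum>i\<in>I. norm (?u i) - Re (?u i)) = 0"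
    using assms(1) complex_Re_le_cmod diff_ge_0_iff_ge by (intro sum_nonneg_eq_0_iff[symmetric]) blast+
  also have "\<dots> \<longleftrightarrow> Re (cnj w * sum z I) = norm w * (\<Sum>i\<in>I. norm (z i))"
    by (auto simp: sum_subtractf sum_distrib_left norm_mult Re_sum)
  finally show ?thesis .
qed

lemma same_arg_unit_imp_eq:
  assumes "same_arg (u * of_real s) w" "norm u = 1" "s > 0" "w \<noteq> 0"
  shows "w = u * of_real (norm w)"
proof -
  have "u * of_real s \<noteq> 0"
    using assms(2,3) by auto
  then obtain r where r: "r > 0" "u * of_real s = of_real r * w"
    using assms(1,4) unfolding same_arg_def by blast
  then have "norm (u * of_real s) = norm (of_real r * w)"
    by simp
  then have "s = r * norm w"
    using assms(2,3) r(1) by (simp add: norm_mult)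
  with r show ?thesis
    by (simp add: field_simps)
qed

section \<open>Gauss sums and exponential sums\<close>

lemma norm_sum_add_char_square:
  assumes "CARD('a::{finite,field}) = CHAR('a) ^ k"
  shows "complex_of_real ((norm (\<Sum>a\<in>A. f a * add_char (a * t :: 'a)))\<^sup>2)
       = (\<Sum>a\<in>A. \<Sum>b\<in>A. f a * cnj (f b) * add_char ((a - b) * t))"
proof -
  have psi: "add_char ((a - b) * t) = add_char (a * t) * cnj (add_char (b * t))" for a b
    by (metis add_char_add[OF assms] cnj_add_char[OF assms] diff_conv_add_uminus left_diff_distrib)
  have "complex_of_real ((norm (\<Sum>a\<in>A. f a * add_char (a * t)))\<^sup>2)
      = (\<Sum>a\<in>A. f a * add_char (a * t)) * cnj (\<Sum>b\<in>A. f b * add_char (b * t))"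
    by (rule complex_norm_square)
  also have "\<dots> = (\<Sum>a\<in>A. \<Sum>b\<in>A. f a * cnj (f b) * add_char ((a - b) * t))"
    by (simp add: cnj_sum sum_product psi) (simp add: mult_ac)
  finally show ?thesis .
qed

lemma plancherel_add_char:
  assumes "CARD('a::{finite,field}) = CHAR('a) ^ k"
  shows "(\<Sum>t\<in>UNIV. (norm (\<Sum>a\<in>A. f a * add_char (a * t :: 'a)))\<^sup>2)
       = real CARD('a) * (\<Sum>a\<in>A. (norm (f a))\<^sup>2)"
proof -
  have "complex_of_real (\<Sum>t\<in>UNIV. (norm (\<Sum>a\<in>A. f a * add_char (a * t :: 'a)))\<^sup>2)
      = (\<Sum>t\<in>UNIV. \<Sum>a\<in>A. \<Sum>b\<in>A. f a * cnj (f b) * add_char ((a - b) * t))"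
    by (simp only: of_real_sum norm_sum_add_char_square[OF assms])
  also have "\<dots> = (\<Sum>a\<in>A. \<Sum>b\<in>A. f a * cnj (f b) * (\<Sum>t\<in>UNIV. add_char ((a - b) * t)))"
    unfolding sum_distrib_left by (subst sum.swap) (rule sum.cong[OF refl], rule sum.swap)
  also have "\<dots> = (\<Sum>a\<in>A. f a * cnj (f a) * of_nat CARD('a))"
    by (simp add: sum_add_char[OF assms] if_distrib[of "\<lambda>x. _ * x"] cong: if_cong)
  also have "\<dots> = of_nat CARD('a) * (\<Sum>a\<in>A. complex_of_real ((norm (f a))\<^sup>2))"
    unfolding complex_norm_square by (simp add: sum_distrib_left mult_ac)
  also have "\<dots> = complex_of_real (real CARD('a) * (\<Sum>a\<in>A. (norm (f a))\<^sup>2))"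
    by simp
  finally show ?thesis
    by (simp only: of_real_eq_iff)
qed

lemma gauss_sum_twist:
  fixes chi :: "'a::{finite,field} \<Rightarrow> complex"
  assumes "CARD('a) = CHAR('a) ^ k" "mult_char chi" "char_order chi d" "d > 1"
  shows "(\<Sum>c\<in>UNIV. chi c * add_char (c * s)) = cnj (chi s) * gauss_sum chi"
proof (cases "s = 0")
  case True
  then show ?thesis
    using sum_char_eq_0[OF assms(2-4)] assms(2) by (simp add: add_char_0 mult_char_def)
next
  case False
  have "(\<Sum>c\<in>UNIV. chi c * add_char (c * s)) = (\<Sum>u\<in>UNIV. chi (inverse s * u) * add_char u)"
    by (rule sum.reindex_bij_witness[of _ "\<lambda>u. inverse s * u" "\<lambda>c. c * s"])
       (use False in \<open>auto simp: field_simps\<close>)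
  also have "\<dots> = cnj (chi s) * gauss_sum chi"
    by (simp add: gauss_sum_def add_char_def mult_char_mult[OF assms(2)]
        char_inverse[OF assms(2,3)] sum_distrib_left mult.assoc)
  finally show ?thesis .
qed

lemma sum_norm_char_square:
  fixes chi :: "'a::{finite,field} \<Rightarrow> complex"
  assumes "mult_char chi" "char_order chi d"
  shows "(\<Sum>c\<in>UNIV. (norm (chi c))\<^sup>2) = real CARD('a) - 1"
proof -
  have "(\<Sum>c\<in>UNIV. (norm (chi c))\<^sup>2) = (\<Sum>c\<in>UNIV - {0}. (norm (chi c))\<^sup>2)"
    using assms(1) by (intro sum.mono_neutral_right) (auto simp: mult_char_def)
  also have "\<dots> = (\<Sum>c\<in>UNIV - {0::'a}. 1)"
    using norm_char[OF assms(2)] by simp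
  finally show ?thesis
    by (simp add: card_Diff_singleton of_nat_diff)
qed

lemma norm_gauss_sum_eq_sqrt_card:
  fixes chi :: "'a::{finite,field} \<Rightarrow> complex"
  assumes "CARD('a) = CHAR('a) ^ k" "mult_char chi" "char_order chi d" "d > 1"
  shows "norm (gauss_sum chi) = sqrt (real CARD('a))"
proof -
  let ?q = "real CARD('a)"
  have "?q * (?q - 1) = (\<Sum>t\<in>UNIV. (norm (\<Sum>c\<in>UNIV. chi c * add_char (c * t :: 'a)))\<^sup>2)"
    by (simp add: plancherel_add_char[OF assms(1)] sum_norm_char_square[OF assms(2,3)])
  also have "\<dots> = (\<Sum>t\<in>UNIV. (norm (chi t))\<^sup>2) * (norm (gauss_sum chi))\<^sup>2"
    by (simp add: gauss_sum_twist[OF assms] norm_mult power_mult_distrib sum_distrib_right)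
  also have "\<dots> = (?q - 1) * (norm (gauss_sum chi))\<^sup>2"
    by (simp add: sum_norm_char_square[OF assms(2,3)])
  finally have "(norm (gauss_sum chi))\<^sup>2 = ?q"
    using finite_field_card_ge_2[where 'a='a] by simp
  then show ?thesis
    by (simp add: real_sqrt_unique)
qed

definition exp_sum :: "'a::{finite,field} set \<Rightarrow> 'a \<Rightarrow> complex" where
  "exp_sum A c = (\<Sum>a\<in>A. add_char (a * c))"

lemma sum_norm_exp_sum_square:
  fixes A :: "'a::{finite,field} set"
  assumes "CARD('a) = CHAR('a) ^ k"
  shows "(\<Sum>c\<in>UNIV - {0}. (norm (exp_sum A c))\<^sup>2)
       = real CARD('a) * real (card A) - (real (card A))\<^sup>2"
proof -
  have "(\<Sum>c\<in>UNIV. (norm (exp_sum A c))\<^sup>2) = real CARD('a) * real (card A)"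
    using plancherel_add_char[OF assms, where f = "\<lambda>_. 1" and A = A] by (simp add: exp_sum_def)
  moreover have "exp_sum A 0 = of_nat (card A)"
    by (simp add: exp_sum_def add_char_0)
  ultimately show ?thesis
    using sum.remove[of UNIV 0 "\<lambda>c. (norm (exp_sum A c))\<^sup>2"] by (simp add: norm_of_nat)
qed

lemma exists_exp_sum_nonzero:
  fixes A :: "'a::{finite,field} set"
  assumes "CARD('a) = CHAR('a) ^ k" "A \<noteq> {}" "A \<noteq> (UNIV :: 'a set)"
  shows "\<exists>c. c \<noteq> 0 \<and> exp_sum A c \<noteq> 0"
proof (rule ccontr)
  assume "\<not> ?thesis"
  then have "(\<Sum>c\<in>UNIV - {0}. (norm (exp_sum A c))\<^sup>2) = 0"
    by (intro sum.neutral) auto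
  then have "real CARD('a) * real (card A) - (real (card A))\<^sup>2 = 0"
    by (simp only: sum_norm_exp_sum_square[OF assms(1)])
  moreover have "0 < card A"
    using assms(2) by (simp add: card_gt_0_iff)
  moreover have "card A < CARD('a)"
    using assms(3) by (intro psubset_card_mono) auto
  ultimately show False
    by (simp add: power2_eq_square)
qed

lemma sum_char_norm_exp_sum_square:
  fixes chi :: "'a::{finite,field} \<Rightarrow> complex" and A :: "'a set"
  assumes "CARD('a) = CHAR('a) ^ k" "mult_char chi" "char_order chi d" "d > 1"
  shows "(\<Sum>c\<in>UNIV. chi c * (norm (exp_sum A c))\<^sup>2)
       = gauss_sum chi * (\<Sum>a\<in>A. \<Sum>b\<in>A. cnj (chi (a - b)))"
proof -
  have "(\<Sum>c\<in>UNIV. chi c * (norm (exp_sum A c))\<^sup>2)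
      = (\<Sum>a\<in>A. \<Sum>b\<in>A. \<Sum>c\<in>UNIV. chi c * add_char (c * (a - b)))"
    using norm_sum_add_char_square[OF assms(1), where f = "\<lambda>_. 1" and A = A]
    by (simp add: exp_sum_def sum_distrib_left mult.commute[of _ "_ - _"] sum.swap[of _ UNIV])
  also have "\<dots> = gauss_sum chi * (\<Sum>a\<in>A. \<Sum>b\<in>A. cnj (chi (a - b)))"
    by (simp add: gauss_sum_twist[OF assms] sum_distrib_left mult.commute)
  finally show ?thesis .
qed

lemma sum_norm_char_mult_norm_exp_sum_square:
  fixes chi :: "'a::{finite,field} \<Rightarrow> complex" and A :: "'a set"
  assumes "CARD('a) = CHAR('a) ^ k" "mult_char chi" "char_order chi d"
  shows "(\<Sum>c\<in>UNIV. norm (chi c * of_real ((norm (exp_sum A c))\<^sup>2)))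
       = real CARD('a) * real (card A) - (real (card A))\<^sup>2"
proof -
  have "(\<Sum>c\<in>UNIV. norm (chi c * of_real ((norm (exp_sum A c))\<^sup>2)))
      = (\<Sum>c\<in>UNIV - {0}. norm (chi c * of_real ((norm (exp_sum A c))\<^sup>2)))"
    using assms(2) by (intro sum.mono_neutral_right) (auto simp: mult_char_def)
  also have "\<dots> = (\<Sum>c\<in>UNIV - {0}. (norm (exp_sum A c))\<^sup>2)"
    by (intro sum.cong) (simp_all add: norm_mult norm_power norm_char[OF assms(3)])
  finally show ?thesis
    by (simp only: sum_norm_exp_sum_square[OF assms(1)])
qed

section \<open>Cliques of generalized Paley graphs\<close>

lemma gp_clique_iff_char:
  fixes chi :: "'a::{finite,field} \<Rightarrow> complex"
  assumes "mult_char chi" "char_order chi d"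
  shows "gp_clique d A \<longleftrightarrow> (\<forall>a\<in>A. \<forall>b\<in>A. a \<noteq> b \<longrightarrow> chi (a - b) = 1)"
  unfolding gp_clique_def gp_adj_def by (auto simp: char_eq_1_iff_power[OF assms])

lemma gp_clique_iff_Re_sum_char:
  fixes chi :: "'a::{finite,field} \<Rightarrow> complex" and A :: "'a set"
  assumes "mult_char chi" "char_order chi d"
  shows "gp_clique d A \<longleftrightarrow>
    Re (\<Sum>a\<in>A. \<Sum>b\<in>A. chi (a - b)) = real (card A) * (real (card A) - 1)"
proof -
  have norm_chi: "norm (chi (a - b)) = (if a = b then 0 else 1)" for a b
    using norm_char[OF assms(2)] assms(1) by (simp add: mult_char_def)
  have nonneg_iff: "chi (a - b) \<in> \<real>\<^sub>\<ge>\<^sub>0 \<longleftrightarrow> (a \<noteq> b \<longrightarrow> chi (a - b) = 1)" for a b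
  proof (cases "a = b")
    case False
    then show ?thesis
      using norm_chi[of a b] by (auto elim: nonneg_Reals_cases)
  qed (use assms(1) in \<open>simp add: mult_char_def\<close>)
  have "gp_clique d A \<longleftrightarrow> (\<forall>(a, b)\<in>A \<times> A. same_arg (chi (a - b)) 1)"
    by (simp add: gp_clique_iff_char[OF assms] same_arg_iff_nonneg_Reals nonneg_iff)
  also have "\<dots> \<longleftrightarrow> Re (\<Sum>(a, b)\<in>A \<times> A. chi (a - b)) = (\<Sum>(a, b)\<in>A \<times> A. norm (chi (a - b)))"
    using sum_same_arg_iff[of "A \<times> A" 1 "\<lambda>(a, b). chi (a - b)"] by (simp add: case_prod_unfold)
  also have "(\<Sum>(a, b)\<in>A \<times> A. norm (chi (a - b))) = (\<Sum>a\<in>A. \<Sum>b\<in>A. 1 - (if a = b then 1 else 0))"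
    by (simp add: sum.cartesian_product[symmetric] norm_chi if_distrib cong: if_cong)
  also have "\<dots> = real (card A) * (real (card A) - 1)"
    by (simp add: sum_subtractf)
  finally show ?thesis
    by (simp add: sum.cartesian_product)
qed

lemma gp_clique_iff_same_arg:
  fixes chi :: "'a::{finite,field} \<Rightarrow> complex" and A :: "'a set"
  assumes "CARD('a) = CHAR('a) ^ k" "mult_char chi" "char_order chi d" "d > 1"
    and card_A: "card A * card A = CARD('a)"
  shows "gp_clique d A \<longleftrightarrow>
    (\<forall>c. c \<noteq> 0 \<longrightarrow> same_arg (chi c * of_real ((norm (exp_sum A c))\<^sup>2)) (gauss_sum chi))"
proof -
  let ?n = "real (card A)" and ?G = "gauss_sum chi"
  define W where "W c = chi c * of_real ((norm (exp_sum A c))\<^sup>2)" for c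
  define X where "X = (\<Sum>a\<in>A. \<Sum>b\<in>A. chi (a - b))"
  have q: "real CARD('a) = ?n * ?n"
    using card_A by (metis of_nat_mult)
  then have norm_G: "norm ?G = ?n"
    using norm_gauss_sum_eq_sqrt_card[OF assms(1-4)] by simp
  have "?n \<noteq> 0"
    using q finite_field_card_ge_2[where 'a='a] by auto
  have "same_arg (W 0) ?G"
    using assms(2) by (simp add: W_def mult_char_def same_arg_def)
  then have "(\<forall>c. c \<noteq> 0 \<longrightarrow> same_arg (W c) ?G) \<longleftrightarrow> (\<forall>c\<in>UNIV. same_arg (W c) ?G)"
    by (metis UNIV_I)
  also have "\<dots> \<longleftrightarrow> Re (cnj ?G * sum W UNIV) = norm ?G * (\<Sum>c\<in>UNIV. norm (W c))"
    using \<open>?n \<noteq> 0\<close> norm_G by (intro sum_same_arg_iff) auto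
  also have "cnj ?G * sum W UNIV = (?G * cnj ?G) * cnj X"
    unfolding W_def X_def sum_char_norm_exp_sum_square[OF assms(1-4)] by (simp add: cnj_sum mult_ac)
  also have "?G * cnj ?G = of_real ((norm ?G)\<^sup>2)"
    by (rule complex_norm_square[symmetric])
  also have "(\<Sum>c\<in>UNIV. norm (W c)) = ?n * (?n * (?n - 1))"
    unfolding W_def sum_norm_char_mult_norm_exp_sum_square[OF assms(1-3)] q
    by (simp add: power2_eq_square algebra_simps)
  also have "Re (of_real ((norm ?G)\<^sup>2) * cnj X) = norm ?G * (?n * (?n * (?n - 1)))
      \<longleftrightarrow> Re X = ?n * (?n - 1)"
    using \<open>?n \<noteq> 0\<close> by (simp add: norm_G power2_eq_square)
  also have "\<dots> \<longleftrightarrow> gp_clique d A"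
    by (simp add: gp_clique_iff_Re_sum_char[OF assms(2,3)] X_def)
  finally show ?thesis
    by (simp add: W_def)
qed

lemma gp_clique_card_square_le:
  fixes A :: "'a::{finite,field} set" and g :: 'a
  assumes "gp_clique d A" "g \<noteq> 0" "\<And>z. z \<noteq> 0 \<Longrightarrow> z ^ d \<noteq> g"
  shows "card A * card A \<le> CARD('a)"
proof -
  have "inj_on (\<lambda>(a, b). a + g * b) (A \<times> A)"
  proof (rule inj_onI, clarify)
    fix a b a' b' assume in_A: "a \<in> A" "b \<in> A" "a' \<in> A" "b' \<in> A"
      and eq: "a + g * b = a' + g * b'"
    show "a = a' \<and> b = b'"
    proof (rule ccontr)
      assume "\<not> ?thesis"
      moreover have diff: "a - a' = g * (b' - b)"
        using eq by (simp add: algebra_simps)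
      ultimately have "a \<noteq> a'" "b \<noteq> b'"
        using assms(2) by auto
      then obtain u v where "u \<noteq> 0" "a - a' = u ^ d" "v \<noteq> 0" "b' - b = v ^ d"
        using assms(1) in_A unfolding gp_clique_def gp_adj_def by metis
      with diff have "(u / v) ^ d = g"
        by (simp add: power_divide)
      with \<open>u \<noteq> 0\<close> \<open>v \<noteq> 0\<close> assms(3)[of "u / v"] show False
        by simp
    qed
  qed
  then have "card (A \<times> A) \<le> CARD('a)"
    by (rule card_inj_on_le) auto
  then show ?thesis
    by (simp add: card_cartesian_product)
qed

lemma finite_gp_clique_sizes: "finite {card (A :: 'a::{finite,field} set) | A. gp_clique d A}"
  by (rule finite_subset[of _ "{..CARD('a)}"]) (auto intro: card_mono)

lemma gp_clique_number_attained:
  "\<exists>A::'a::{finite,field} set. gp_clique d A \<and> card A = gp_clique_number TYPE('a) d"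
proof -
  have "gp_clique d ({} :: 'a set)"
    by (simp add: gp_clique_def)
  then have "gp_clique_number TYPE('a) d \<in> {card (A :: 'a set) | A. gp_clique d A}"
    unfolding gp_clique_number_def by (intro Max_in finite_gp_clique_sizes) auto
  then show ?thesis
    by auto
qed

lemma card_le_gp_clique_number:
  assumes "gp_clique d (A :: 'a::{finite,field} set)"
  shows "card A \<le> gp_clique_number TYPE('a) d"
  unfolding gp_clique_number_def using assms by (intro Max_ge finite_gp_clique_sizes) auto

lemma gp_max_clique_iff_clique:
  fixes A :: "'a::{finite,field} set" and g :: 'a
  assumes "card A * card A = CARD('a)" "g \<noteq> 0" "\<And>z. z \<noteq> 0 \<Longrightarrow> z ^ d \<noteq> g"
  shows "gp_max_clique d A \<longleftrightarrow> gp_clique d A"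
proof
  assume "gp_clique d A"
  obtain B :: "'a set" where "gp_clique d B" "card B = gp_clique_number TYPE('a) d"
    using gp_clique_number_attained by blast
  then have "(gp_clique_number TYPE('a) d)\<^sup>2 \<le> (card A)\<^sup>2"
    using gp_clique_card_square_le[OF _ assms(2,3)] assms(1) by (metis power2_eq_square)
  then have "gp_clique_number TYPE('a) d \<le> card A"
    by (simp only: power2_nat_le_eq_le)
  with \<open>gp_clique d A\<close> show "gp_max_clique d A"
    unfolding gp_max_clique_def using card_le_gp_clique_number le_antisym by blast
qed (simp add: gp_max_clique_def)

lemma exists_nonzero_non_power:
  fixes chi :: "'a::{finite,field} \<Rightarrow> complex"
  assumes "mult_char chi" "char_order chi d" "d > 1"
  shows "\<exists>g::'a. g \<noteq> 0 \<and> (\<forall>z. z \<noteq> 0 \<longrightarrow> z ^ d \<noteq> g)"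
proof -
  obtain g :: 'a where "g \<noteq> 0" "chi g \<noteq> 1"
    using char_nontrivial[OF assms(2,3)] by blast
  then show ?thesis
    using char_eq_1_iff_power[OF assms(1,2)] by auto
qed

lemma norm_gauss_sum_eq_char:
  fixes chi :: "'a::{finite,field} \<Rightarrow> complex" and A :: "'a set"
  assumes "CARD('a) = CHAR('a) ^ k" "mult_char chi" "char_order chi d" "d > 1"
    and "card A * card A = CARD('a)" "gp_clique d A" "c \<noteq> 0" "exp_sum A c \<noteq> 0"
  shows "norm_gauss_sum chi = chi c"
proof -
  have norm_G: "norm (gauss_sum chi) = sqrt (real CARD('a))"
    by (rule norm_gauss_sum_eq_sqrt_card[OF assms(1-4)])
  then have "gauss_sum chi \<noteq> 0"
    using finite_field_card_ge_2[where 'a='a] by auto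
  moreover have "same_arg (chi c * of_real ((norm (exp_sum A c))\<^sup>2)) (gauss_sum chi)"
    using gp_clique_iff_same_arg[OF assms(1-5)] assms(6,7) by blast
  ultimately have "gauss_sum chi = chi c * of_real (norm (gauss_sum chi))"
    using norm_char[OF assms(3,7)] assms(8)
    by (intro same_arg_unit_imp_eq[where s = "(norm (exp_sum A c))\<^sup>2"]) simp_all
  then show ?thesis
    using \<open>gauss_sum chi \<noteq> 0\<close> by (simp add: norm_gauss_sum_def norm_G)
qed

lemma of_nat_eq_sqrt_iff: "real n = sqrt (real m) \<longleftrightarrow> n * n = m"
proof
  assume "real n = sqrt (real m)"
  then have "real (n * n) = real m"
    by (simp only: of_nat_mult real_sqrt_mult_self)
  then show "n * n = m"
    by (simp only: of_nat_eq_iff)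
next
  assume "n * n = m"
  then have "real m = real n * real n"
    by (metis of_nat_mult)
  then show "real n = sqrt (real m)"
    by simp
qed

lemma exists_char_eq_norm_gauss_sum:
  fixes chi :: "'a::{finite,field} \<Rightarrow> complex"
  assumes "CARD('a) = CHAR('a) ^ k" "mult_char chi" "char_order chi d" "d > 1"
    and "real (gp_clique_number TYPE('a) d) = sqrt (real CARD('a))"
  shows "\<exists>c. c \<noteq> 0 \<and> norm_gauss_sum chi = chi c"
proof -
  obtain B :: "'a set" where B: "gp_clique d B" "card B = gp_clique_number TYPE('a) d"
    using gp_clique_number_attained by blast
  then have card_B: "card B * card B = CARD('a)"
    using assms(5) by (simp add: of_nat_eq_sqrt_iff)
  have "B \<noteq> {}"
    using card_B finite_field_card_ge_2[where 'a='a] by auto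
  moreover have "B \<noteq> UNIV"
    using card_B finite_field_card_ge_2[where 'a='a] by auto
  ultimately obtain c where "c \<noteq> 0" "exp_sum B c \<noteq> 0"
    using exists_exp_sum_nonzero[OF assms(1), of B] by blast
  then show ?thesis
    using norm_gauss_sum_eq_char[OF assms(1-4) card_B B(1)] by blast
qed

lemma gauss_sum_eq_norm_gauss_sum_mult_sqrt:
  fixes chi :: "'a::{finite,field} \<Rightarrow> complex"
  shows "gauss_sum chi = norm_gauss_sum chi * of_real (sqrt (real CARD('a)))"
  using finite_field_card_ge_2[where 'a='a] by (simp add: norm_gauss_sum_def)

lemma pure_gauss_sum:
  fixes chi :: "'a::{finite,field} \<Rightarrow> complex"
  assumes "norm_gauss_sum chi ^ d = 1" "d > 0"
  shows "pure (gauss_sum chi)"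
proof -
  have "gauss_sum chi powi int d = of_real (sqrt (real CARD('a)) ^ d)"
    by (subst gauss_sum_eq_norm_gauss_sum_mult_sqrt) (simp add: power_mult_distrib assms(1))
  then show ?thesis
    unfolding pure_def using assms(2) by (intro exI[of _ "int d"]) simp
qed

lemma gauss_sum_properties_if_clique_number_sqrt:
  fixes chi :: "'a::{finite,field} \<Rightarrow> complex" and A :: "'a set"
  assumes "CARD('a) = CHAR('a) ^ k" "mult_char chi" "char_order chi d" "d > 1"
    and card_A: "card A * card A = CARD('a)"
    and clique_number: "real (gp_clique_number TYPE('a) d) = sqrt (real CARD('a))"
  shows "norm_gauss_sum chi ^ d = 1
    \<and> gauss_sum chi = norm_gauss_sum chi * of_real (sqrt (real CARD('a)))
    \<and> pure (gauss_sum chi)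
    \<and> (gp_clique d A \<longrightarrow> (\<forall>c. c \<noteq> 0 \<and> chi c \<noteq> norm_gauss_sum chi \<longrightarrow> exp_sum A c = 0))"
proof (intro conjI impI allI gauss_sum_eq_norm_gauss_sum_mult_sqrt)
  obtain c0 where "c0 \<noteq> 0" "norm_gauss_sum chi = chi c0"
    using exists_char_eq_norm_gauss_sum[OF assms(1-4) clique_number] by blast
  then show root: "norm_gauss_sum chi ^ d = 1"
    using char_order_power_eq_1[OF assms(3)] by simp
  show "pure (gauss_sum chi)"
    using pure_gauss_sum[OF root] assms(4) by simp
  fix c
  assume clique: "gp_clique d A" and c: "c \<noteq> 0 \<and> chi c \<noteq> norm_gauss_sum chi"
  show "exp_sum A c = 0"
    by (rule ccontr) (use norm_gauss_sum_eq_char[OF assms(1-4) card_A clique, of c] c in auto)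
qed

theorem theorem1p9:
  fixes chi :: "'a::{finite,field} \<Rightarrow> complex"
    and A :: "'a set" and p d m :: nat
  assumes "prime p" and "odd p" and "CHAR('a) = p"
    and "CARD('a) = p ^ (2 * m)"
    and "d > 1" and "CARD('a) mod (2 * d) = 1"
    and "mult_char chi" and "char_order chi d"
    and "real (card A) = sqrt (real CARD('a))"
  defines "S \<equiv> (\<lambda>c. \<Sum>a\<in>A. e_p (abs_trace (a * c)))"
  shows "(gp_max_clique d A \<longleftrightarrow>
           (\<forall>c. c \<noteq> 0 \<longrightarrow> same_arg (chi c * complex_of_real ((cmod (S c))\<^sup>2)) (gauss_sum chi)))
       \<and> (real (gp_clique_number TYPE('a) d) = sqrt (real CARD('a)) \<longrightarrow>
           norm_gauss_sum chi ^ d = 1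
         \<and> gauss_sum chi = norm_gauss_sum chi * complex_of_real (sqrt (real CARD('a)))
         \<and> pure (gauss_sum chi)
         \<and> (gp_max_clique d A \<longrightarrow>
              (\<forall>c. c \<noteq> 0 \<and> chi c \<noteq> norm_gauss_sum chi \<longrightarrow> S c = 0)))"
proof -
  have q: "CARD('a) = CHAR('a) ^ (2 * m)"
    using assms(3,4) by simp
  note chi = assms(7,8,5)
  have S: "S = exp_sum A"
    by (simp add: S_def exp_sum_def add_char_def fun_eq_iff)
  have card_A: "card A * card A = CARD('a)"
    using assms(9) by (simp add: of_nat_eq_sqrt_iff)
  obtain g :: 'a where g: "g \<noteq> 0" "\<And>z. z \<noteq> 0 \<Longrightarrow> z ^ d \<noteq> g"
    using exists_nonzero_non_power[OF chi] by blast
  have max_clique_iff: "gp_max_clique d A \<longleftrightarrow> gp_clique d A"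
    by (rule gp_max_clique_iff_clique[OF card_A g])
  show ?thesis
    unfolding S max_clique_iff
    using gp_clique_iff_same_arg[OF q chi card_A]
      gauss_sum_properties_if_clique_number_sqrt[OF q chi card_A] by blast
qed

end
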